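(* Let $(L,\delta,\alpha,\beta)$ be a BiHom-Lie algebra, $(V,\alpha_V,\beta_V)$ an abelian BiHom-Lie algebra, $(\lambda_l,\lambda_r)$ a representation of $L$ on $V$, and let $\theta,\theta'$ be $2$-cocycles of $L$ on $V$ with respect to $(\lambda_l,\lambda_r)$ which are equivalent, i.e. $\theta'-\theta=D_1(h)$ for some $h\in C^1(L,V)$. Define $d,d'$ on $L\oplus V$ by $d(x+v,y+w)=\delta(x,y)+\theta(x,y)+\lambda_l(x,w)+\lambda_r(v,y)$ and $d'(x+v,y+w)=\delta(x,y)+\theta'(x,y)+\lambda_l(x,w)+\lambda_r(v,y)$. Then the extensions $$0\to(V,\alpha_V,\beta_V)\xrightarrow{i_0}(L\oplus V,d,\alpha+\alpha_V,\beta+\beta_V)\xrightarrow{\pi_0}(L,\delta,\alpha,\beta)\to0$$ and $$0\to(V,\alpha_V,\beta_V)\xrightarrow{i_0}(L\oplus V,d',\alpha+\alpha_V,\beta+\beta_V)\xrightarrow{\pi_0}(L,\delta,\alpha,\beta)\to0,$$ where $i_0(v)=v$, $\pi_0(x+v)=x$, are equivalent.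
   Context: All vector spaces are over a field $\mathbb{K}$. A BiHom-Lie algebra $(L,\delta,\alpha,\beta)$ is a vector space with bilinear $\delta$ and linear $\alpha,\beta$ such that $\alpha\beta=\beta\alpha$, $\delta(\beta(x),\alpha(y))=-\delta(\beta(y),\alpha(x))$ and $\delta(\beta^2(x),\delta(\beta(y),\alpha(z)))+\delta(\beta^2(y),\delta(\beta(z),\alpha(x)))+\delta(\beta^2(z),\delta(\beta(x),\alpha(y)))=0$. A morphism of BiHom-Lie algebras is a linear map commuting with the two structure maps and the brackets. An abelian BiHom-Lie algebra $(V,\alpha_V,\beta_V)$ has zero bracket and commuting linear maps $\alpha_V,\beta_V$. On $L\oplus V$, $\alpha+\alpha_V$ is $x+v\mapsto\alpha(x)+\alpha_V(v)$, similarly $\beta+\beta_V$. Two extensions $0\to V_1\xrightarrow{i_1}M_1\xrightarrow{\pi_1}L_1\to0$, $0\to V_2\xrightarrow{i_2}M_2\xrightarrow{\pi_2}L_2\to0$ (short exact sequences of BiHom-Lie algebra morphisms) are equivalent if there exist linear maps $\varphi\colon V_1\to V_2$, $s\colon L_1\to L_2$ and an isomorphism of BiHom-Lie algebras $\Phi\colon M_1\to M_2$ with $\Phi\circ i_1=i_2\circ\varphi$ and $\pi_2\circ\Phi=s\circ\pi_1$. A representation of $L$ on $V$ is a pair of bilinear maps $\lambda_l\colon L\times V\to V$, $\lambda_r\colon V\times L\to V$ with, for all $x,y\in L$, $v\in V$: $\lambda_r(\beta_V(v),\alpha(y))=-\lambda_l(\beta(y),\alpha_V(v))$ and $\lambda_l(\beta^2(x),\lambda_l(\beta(y),\alpha_V(v)))+\lambda_l(\beta^2(y),\lambda_r(\beta_V(v),\alpha(x)))+\lambda_r(\beta_V^2(v),\delta(\beta(x),\alpha(y)))=0$.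 A $2$-cocycle is a bilinear $\theta\colon L\times L\to V$ with $\theta(\beta(x),\alpha(y))=-\theta(\beta(y),\alpha(x))$ and $\theta(\beta^2(x),\delta(\beta(y),\alpha(z)))-\theta(\beta^2(y),\delta(\beta(x),\alpha(z)))+\theta(\beta^2(z),\delta(\beta(x),\alpha(y)))+\lambda_l(\beta^2(x),\theta(\beta(y),\alpha(z)))-\lambda_l(\beta^2(y),\theta(\beta(x),\alpha(z)))+\lambda_l(\beta^2(z),\theta(\beta(x),\alpha(y)))=0$ for all $x,y,z$. $C^1(L,V)$ is the set of linear $h\colon L\to V$ with $h\alpha=\alpha_V h$, $h\beta=\beta_V h$, and $D_1(h)(x,y)=-h(\delta(x,y))+\lambda_l(x,h(y))+\lambda_r(h(x),y)$. *)

theory Defs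
  imports Complex_Main "HOL-Library.Product_Plus"
begin

definition bilinear_map ::
  "('k::field \<Rightarrow> 'a::ab_group_add \<Rightarrow> 'a) \<Rightarrow> ('k \<Rightarrow> 'b::ab_group_add \<Rightarrow> 'b) \<Rightarrow>
   ('k \<Rightarrow> 'c::ab_group_add \<Rightarrow> 'c) \<Rightarrow> ('a \<Rightarrow> 'b \<Rightarrow> 'c) \<Rightarrow> bool" where
  "bilinear_map s1 s2 s3 f \<longleftrightarrow>
     (\<forall>x. Vector_Spaces.linear s2 s3 (f x)) \<and> (\<forall>y. Vector_Spaces.linear s1 s3 (\<lambda>x. f x y))"

definition BiHomLie ::
  "('k::field \<Rightarrow> 'l::ab_group_add \<Rightarrow> 'l) \<Rightarrow> ('l \<Rightarrow> 'l \<Rightarrow> 'l) \<Rightarrow> ('l \<Rightarrow> 'l) \<Rightarrow> ('l \<Rightarrow> 'l) \<Rightarrow> bool" where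
  "BiHomLie s \<delta> \<alpha> \<beta> \<longleftrightarrow>
     Vector_Spaces.vector_space s \<and> bilinear_map s s s \<delta> \<and>
     Vector_Spaces.linear s s \<alpha> \<and> Vector_Spaces.linear s s \<beta> \<and>
     \<alpha> \<circ> \<beta> = \<beta> \<circ> \<alpha> \<and>
     (\<forall>x y. \<delta> (\<beta> x) (\<alpha> y) = - \<delta> (\<beta> y) (\<alpha> x)) \<and>
     (\<forall>x y z. \<delta> (\<beta> (\<beta> x)) (\<delta> (\<beta> y) (\<alpha> z)) + \<delta> (\<beta> (\<beta> y)) (\<delta> (\<beta> z) (\<alpha> x))
              + \<delta> (\<beta> (\<beta> z)) (\<delta> (\<beta> x) (\<alpha> y)) = 0)"

definition abelian_BiHomLie ::
  "('k::field \<Rightarrow> 'v::ab_group_add \<Rightarrow> 'v) \<Rightarrow> ('v \<Rightarrow> 'v) \<Rightarrow> ('v \<Rightarrow> 'v) \<Rightarrow> bool" where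
  "abelian_BiHomLie s \<alpha>V \<beta>V \<longleftrightarrow> BiHomLie s (\<lambda>_ _. 0) \<alpha>V \<beta>V"

definition representation ::
  "('k::field \<Rightarrow> 'l::ab_group_add \<Rightarrow> 'l) \<Rightarrow> ('l \<Rightarrow> 'l \<Rightarrow> 'l) \<Rightarrow> ('l \<Rightarrow> 'l) \<Rightarrow> ('l \<Rightarrow> 'l) \<Rightarrow>
   ('k \<Rightarrow> 'v::ab_group_add \<Rightarrow> 'v) \<Rightarrow> ('v \<Rightarrow> 'v) \<Rightarrow> ('v \<Rightarrow> 'v) \<Rightarrow>
   ('l \<Rightarrow> 'v \<Rightarrow> 'v) \<Rightarrow> ('v \<Rightarrow> 'l \<Rightarrow> 'v) \<Rightarrow> bool" where
  "representation sL \<delta> \<alpha> \<beta> sV \<alpha>V \<beta>V lamL lamR \<longleftrightarrow>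
     bilinear_map sL sV sV lamL \<and> bilinear_map sV sL sV lamR \<and>
     (\<forall>y v. lamR (\<beta>V v) (\<alpha> y) = - lamL (\<beta> y) (\<alpha>V v)) \<and>
     (\<forall>x y v. lamL (\<beta> (\<beta> x)) (lamL (\<beta> y) (\<alpha>V v)) + lamL (\<beta> (\<beta> y)) (lamR (\<beta>V v) (\<alpha> x))
              + lamR (\<beta>V (\<beta>V v)) (\<delta> (\<beta> x) (\<alpha> y)) = 0)"

definition two_cocycle ::
  "('k::field \<Rightarrow> 'l::ab_group_add \<Rightarrow> 'l) \<Rightarrow> ('l \<Rightarrow> 'l \<Rightarrow> 'l) \<Rightarrow> ('l \<Rightarrow> 'l) \<Rightarrow> ('l \<Rightarrow> 'l) \<Rightarrow>
   ('k \<Rightarrow> 'v::ab_group_add \<Rightarrow> 'v) \<Rightarrow> ('l \<Rightarrow> 'v \<Rightarrow> 'v) \<Rightarrow> ('l \<Rightarrow> 'l \<Rightarrow> 'v) \<Rightarrow> bool" where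
  "two_cocycle sL \<delta> \<alpha> \<beta> sV lamL \<theta> \<longleftrightarrow>
     bilinear_map sL sL sV \<theta> \<and>
     (\<forall>x y. \<theta> (\<beta> x) (\<alpha> y) = - \<theta> (\<beta> y) (\<alpha> x)) \<and>
     (\<forall>x y z. \<theta> (\<beta> (\<beta> x)) (\<delta> (\<beta> y) (\<alpha> z)) - \<theta> (\<beta> (\<beta> y)) (\<delta> (\<beta> x) (\<alpha> z))
              + \<theta> (\<beta> (\<beta> z)) (\<delta> (\<beta> x) (\<alpha> y))
              + lamL (\<beta> (\<beta> x)) (\<theta> (\<beta> y) (\<alpha> z)) - lamL (\<beta> (\<beta> y)) (\<theta> (\<beta> x) (\<alpha> z))
              + lamL (\<beta> (\<beta> z)) (\<theta> (\<beta> x) (\<alpha> y)) = 0)"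

definition C1 ::
  "('k::field \<Rightarrow> 'l::ab_group_add \<Rightarrow> 'l) \<Rightarrow> ('l \<Rightarrow> 'l) \<Rightarrow> ('l \<Rightarrow> 'l) \<Rightarrow>
   ('k \<Rightarrow> 'v::ab_group_add \<Rightarrow> 'v) \<Rightarrow> ('v \<Rightarrow> 'v) \<Rightarrow> ('v \<Rightarrow> 'v) \<Rightarrow> ('l \<Rightarrow> 'v) set" where
  "C1 sL \<alpha> \<beta> sV \<alpha>V \<beta>V =
     {h. Vector_Spaces.linear sL sV h \<and> h \<circ> \<alpha> = \<alpha>V \<circ> h \<and> h \<circ> \<beta> = \<beta>V \<circ> h}"

definition D1 ::
  "('l \<Rightarrow> 'l \<Rightarrow> 'l) \<Rightarrow> ('l \<Rightarrow> 'v::ab_group_add \<Rightarrow> 'v) \<Rightarrow> ('v \<Rightarrow> 'l \<Rightarrow> 'v) \<Rightarrow> ('l \<Rightarrow> 'v) \<Rightarrow> 'l \<Rightarrow> 'l \<Rightarrow> 'v" where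
  "D1 \<delta> lamL lamR h x y = - h (\<delta> x y) + lamL x (h y) + lamR (h x) y"

text \<open>Direct sum L \<oplus> V as the product type, with componentwise structure.\<close>
definition sum_scale :: "('k \<Rightarrow> 'l \<Rightarrow> 'l) \<Rightarrow> ('k \<Rightarrow> 'v \<Rightarrow> 'v) \<Rightarrow> 'k \<Rightarrow> 'l \<times> 'v \<Rightarrow> 'l \<times> 'v" where
  "sum_scale sL sV c p = (sL c (fst p), sV c (snd p))"

definition sum_map :: "('l \<Rightarrow> 'l) \<Rightarrow> ('v \<Rightarrow> 'v) \<Rightarrow> 'l \<times> 'v \<Rightarrow> 'l \<times> 'v" where
  "sum_map f g p = (f (fst p), g (snd p))"

definition ext_bracket ::
  "('l \<Rightarrow> 'l \<Rightarrow> 'l) \<Rightarrow> ('l \<Rightarrow> 'l \<Rightarrow> 'v::ab_group_add) \<Rightarrow> ('l \<Rightarrow> 'v \<Rightarrow> 'v) \<Rightarrow> ('v \<Rightarrow> 'l \<Rightarrow> 'v) \<Rightarrow>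
   'l \<times> 'v \<Rightarrow> 'l \<times> 'v \<Rightarrow> 'l \<times> 'v" where
  "ext_bracket \<delta> \<theta> lamL lamR p q =
     (\<delta> (fst p) (fst q), \<theta> (fst p) (fst q) + lamL (fst p) (snd q) + lamR (snd p) (fst q))"

definition i0 :: "'v \<Rightarrow> ('l::zero) \<times> 'v" where "i0 v = (0, v)"
definition pi0 :: "'l \<times> 'v \<Rightarrow> 'l" where "pi0 p = fst p"

definition BiHomLie_morphism ::
  "('k::field \<Rightarrow> 'a::ab_group_add \<Rightarrow> 'a) \<Rightarrow> ('a \<Rightarrow> 'a \<Rightarrow> 'a) \<Rightarrow> ('a \<Rightarrow> 'a) \<Rightarrow> ('a \<Rightarrow> 'a) \<Rightarrow>
   ('k \<Rightarrow> 'b::ab_group_add \<Rightarrow> 'b) \<Rightarrow> ('b \<Rightarrow> 'b \<Rightarrow> 'b) \<Rightarrow> ('b \<Rightarrow> 'b) \<Rightarrow> ('b \<Rightarrow> 'b) \<Rightarrow>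
   ('a \<Rightarrow> 'b) \<Rightarrow> bool" where
  "BiHomLie_morphism s1 d1 a1 b1 s2 d2 a2 b2 f \<longleftrightarrow>
     Vector_Spaces.linear s1 s2 f \<and> f \<circ> a1 = a2 \<circ> f \<and> f \<circ> b1 = b2 \<circ> f \<and>
     (\<forall>x y. f (d1 x y) = d2 (f x) (f y))"

definition BiHomLie_iso where
  "BiHomLie_iso s1 d1 a1 b1 s2 d2 a2 b2 f \<longleftrightarrow>
     BiHomLie_morphism s1 d1 a1 b1 s2 d2 a2 b2 f \<and> bij f"

definition ext_equivalent ::
  "('k::field \<Rightarrow> 'v1::ab_group_add \<Rightarrow> 'v1) \<Rightarrow> ('k \<Rightarrow> 'm1::ab_group_add \<Rightarrow> 'm1) \<Rightarrow>
   ('m1 \<Rightarrow> 'm1 \<Rightarrow> 'm1) \<Rightarrow> ('m1 \<Rightarrow> 'm1) \<Rightarrow> ('m1 \<Rightarrow> 'm1) \<Rightarrow> ('k \<Rightarrow> 'l1::ab_group_add \<Rightarrow> 'l1) \<Rightarrow>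
   ('v1 \<Rightarrow> 'm1) \<Rightarrow> ('m1 \<Rightarrow> 'l1) \<Rightarrow>
   ('k \<Rightarrow> 'v2::ab_group_add \<Rightarrow> 'v2) \<Rightarrow> ('k \<Rightarrow> 'm2::ab_group_add \<Rightarrow> 'm2) \<Rightarrow>
   ('m2 \<Rightarrow> 'm2 \<Rightarrow> 'm2) \<Rightarrow> ('m2 \<Rightarrow> 'm2) \<Rightarrow> ('m2 \<Rightarrow> 'm2) \<Rightarrow> ('k \<Rightarrow> 'l2::ab_group_add \<Rightarrow> 'l2) \<Rightarrow>
   ('v2 \<Rightarrow> 'm2) \<Rightarrow> ('m2 \<Rightarrow> 'l2) \<Rightarrow> bool" where
  "ext_equivalent sV1 sM1 d1 a1 b1 sL1 i1 p1 sV2 sM2 d2 a2 b2 sL2 i2 p2 \<longleftrightarrow>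
     (\<exists>\<phi> s \<Phi>. Vector_Spaces.linear sV1 sV2 \<phi> \<and> Vector_Spaces.linear sL1 sL2 s \<and>
        BiHomLie_iso sM1 d1 a1 b1 sM2 d2 a2 b2 \<Phi> \<and>
        \<Phi> \<circ> i1 = i2 \<circ> \<phi> \<and> p2 \<circ> \<Phi> = s \<circ> p1)"

end

theory Submission
  imports Defs
begin

text \<open>Since \<theta>' = \<theta> + D1 h, the shear (x, v) \<mapsto> (x, v - h x) of L \<oplus> V turns the bracket
  twisted by \<theta> into the one twisted by \<theta>'. It commutes with the structure maps because h
  does, fixes V pointwise and covers the identity of L, so it is the required isomorphism,
  with \<phi> = s = id.\<close>

lemma vector_space_sum_scale:
  assumes "Vector_Spaces.vector_space sL" and "Vector_Spaces.vector_space sV"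
  shows "Vector_Spaces.vector_space (sum_scale sL sV)"
  using assms unfolding vector_space_def sum_scale_def
  by (auto simp: plus_prod_def)

lemma linear_diff_apply:
  assumes "Vector_Spaces.linear s1 s2 f"
  shows "f (x - y) = f x - f y"
  using assms by (simp add: linear_iff_module_hom module_hom.diff)

definition shear :: "('l \<Rightarrow> 'v) \<Rightarrow> 'l \<times> 'v \<Rightarrow> 'l \<times> 'v::ab_group_add" where
  "shear h p = (fst p, snd p - h (fst p))"

lemma bij_shear: "bij (shear h)"
  by (rule bij_betw_byWitness[where f' = "shear (\<lambda>x. - h x)"]) (auto simp: shear_def)

lemma linear_shear:
  assumes "Vector_Spaces.linear sL sV h"
  shows "Vector_Spaces.linear (sum_scale sL sV) (sum_scale sL sV) (shear h)"
proof -
  have "Vector_Spaces.vector_space (sum_scale sL sV)"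
    using assms by (simp add: Vector_Spaces.linear_iff vector_space_sum_scale)
  moreover have "sV c (a - b) = sV c a - sV c b" for c a b
    using assms by (simp add: Vector_Spaces.linear_iff module_iff_vector_space[symmetric]
        module.scale_right_diff_distrib)
  ultimately show ?thesis
    using assms by (auto simp: Vector_Spaces.linear_iff shear_def sum_scale_def plus_prod_def)
qed

lemma shear_comp_sum_map:
  assumes "h \<circ> \<alpha> = \<alpha>V \<circ> h" and "Vector_Spaces.linear sV sV \<alpha>V"
  shows "shear h \<circ> sum_map \<alpha> \<alpha>V = sum_map \<alpha> \<alpha>V \<circ> shear h"
  using assms by (auto simp: fun_eq_iff shear_def sum_map_def linear_diff_apply)

lemma shear_ext_bracket:
  assumes "bilinear_map sL sV sV lamL" and "bilinear_map sV sL sV lamR"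
    and "\<And>x y. \<theta>' x y - \<theta> x y = D1 \<delta> lamL lamR h x y"
  shows "shear h (ext_bracket \<delta> \<theta> lamL lamR p q)
           = ext_bracket \<delta> \<theta>' lamL lamR (shear h p) (shear h q)"
proof -
  have lamL_diff: "lamL x (w - w') = lamL x w - lamL x w'" for x w w'
    using assms(1) unfolding bilinear_map_def by (metis linear_diff_apply)
  have lamR_diff: "lamR (v - v') y = lamR v y - lamR v' y" for v v' y
    using assms(2) unfolding bilinear_map_def
    by (blast intro: linear_diff_apply[of sV sV "\<lambda>v. lamR v y"])
  have cohomologous: "\<theta>' x y = \<theta> x y + D1 \<delta> lamL lamR h x y" for x y
    using assms(3)[of x y] by (simp add: algebra_simps)
  show ?thesis
    by (simp add: shear_def ext_bracket_def D1_def lamL_diff lamR_diff cohomologous algebra_simps)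
qed

lemma BiHomLie_iso_shear:
  assumes h: "h \<in> C1 sL \<alpha> \<beta> sV \<alpha>V \<beta>V"
    and "Vector_Spaces.linear sV sV \<alpha>V" and "Vector_Spaces.linear sV sV \<beta>V"
    and "bilinear_map sL sV sV lamL" and "bilinear_map sV sL sV lamR"
    and "\<And>x y. \<theta>' x y - \<theta> x y = D1 \<delta> lamL lamR h x y"
  shows "BiHomLie_iso
           (sum_scale sL sV) (ext_bracket \<delta> \<theta> lamL lamR) (sum_map \<alpha> \<alpha>V) (sum_map \<beta> \<beta>V)
           (sum_scale sL sV) (ext_bracket \<delta> \<theta>' lamL lamR) (sum_map \<alpha> \<alpha>V) (sum_map \<beta> \<beta>V)
           (shear h)"
  using assms h[unfolded C1_def]
  by (simp add: BiHomLie_iso_def BiHomLie_morphism_def bij_shear linear_shear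
      shear_comp_sum_map shear_ext_bracket)

theorem mainTheorem4:
  fixes sL :: "'k::field \<Rightarrow> 'l::ab_group_add \<Rightarrow> 'l"
    and sV :: "'k \<Rightarrow> 'v::ab_group_add \<Rightarrow> 'v"
    and \<delta> :: "'l \<Rightarrow> 'l \<Rightarrow> 'l" and \<alpha> \<beta> :: "'l \<Rightarrow> 'l"
    and \<alpha>V \<beta>V :: "'v \<Rightarrow> 'v"
    and lamL :: "'l \<Rightarrow> 'v \<Rightarrow> 'v" and lamR :: "'v \<Rightarrow> 'l \<Rightarrow> 'v"
    and \<theta> \<theta>' :: "'l \<Rightarrow> 'l \<Rightarrow> 'v" and h :: "'l \<Rightarrow> 'v"
  assumes L: "BiHomLie sL \<delta> \<alpha> \<beta>"
    and V: "abelian_BiHomLie sV \<alpha>V \<beta>V"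
    and rep: "representation sL \<delta> \<alpha> \<beta> sV \<alpha>V \<beta>V lamL lamR"
    and coc: "two_cocycle sL \<delta> \<alpha> \<beta> sV lamL \<theta>"
    and coc': "two_cocycle sL \<delta> \<alpha> \<beta> sV lamL \<theta>'"
    and h: "h \<in> C1 sL \<alpha> \<beta> sV \<alpha>V \<beta>V"
    and eqv: "\<And>x y. \<theta>' x y - \<theta> x y = D1 \<delta> lamL lamR h x y"
  shows "ext_equivalent
           sV (sum_scale sL sV) (ext_bracket \<delta> \<theta> lamL lamR) (sum_map \<alpha> \<alpha>V) (sum_map \<beta> \<beta>V) sL i0 pi0
           sV (sum_scale sL sV) (ext_bracket \<delta> \<theta>' lamL lamR) (sum_map \<alpha> \<alpha>V) (sum_map \<beta> \<beta>V) sL i0 pi0"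
proof -
  have vector_space_V: "Vector_Spaces.vector_space sV"
    and \<alpha>V: "Vector_Spaces.linear sV sV \<alpha>V" and \<beta>V: "Vector_Spaces.linear sV sV \<beta>V"
    using V by (simp_all add: abelian_BiHomLie_def BiHomLie_def)
  have lamL: "bilinear_map sL sV sV lamL" and lamR: "bilinear_map sV sL sV lamR"
    using rep by (simp_all add: representation_def)
  note iso = BiHomLie_iso_shear[OF h \<alpha>V \<beta>V lamL lamR eqv]
  have "h 0 = 0"
    using h unfolding C1_def linear_iff_module_hom by (blast intro: module_hom.zero)
  then have "shear h \<circ> i0 = i0 \<circ> id" and "pi0 \<circ> shear h = id \<circ> pi0"
    by (auto simp: fun_eq_iff shear_def i0_def pi0_def)
  moreover have "Vector_Spaces.linear sV sV id" and "Vector_Spaces.linear sL sL id"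
    using vector_space_V L by (simp_all add: vector_space.linear_id BiHomLie_def)
  ultimately show ?thesis
    unfolding ext_equivalent_def using iso by blast
qed

end
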